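(* Let $(p,f)$ be an SCF-RT generated by a drift-diffusion model (DDM) with constant or collapsing boundaries and underlying utility function $u:X\to\mathbb{R}$. Then for any $(x,y)\in D$, with $q=p(x,y)/p(y,x)$: if $u(x)\geq u(y)$ then $F(y,x)$ $q$-FSD $F(x,y)$, and if $u(x)>u(y)$ then $F(y,x)$ $q$-SFSD $F(x,y)$.
   Context: $X$ is a finite set of options; $C=\{(x,y): x,y\in X,\ x\neq y\}$; $D\subseteq C$ is a fixed non-empty set with $(x,y)\in D\Rightarrow (y,x)\in D$. An SCF $p$ assigns to each $(x,y)\in D$ a number $p(x,y)>0$ with $p(x,y)+p(y,x)=1$. An SCF-RT is a pair $(p,f)$ where $p$ is an SCF and $f$ assigns to each $(x,y)\in D$ a strictly positive density $f(x,y)$ on $\mathbb{R}^+$ with cdf $F(x,y)$ (response time distribution conditional on choosing $x$ from $\{x,y\}$). A DDM with underlying utility $u$ is given by drift rates $\mu(x,y)\in\mathbb{R}$ for $(x,y)\in D$ with $\mu(x,y)=-\mu(y,x)$ and $\mu(x,y)\geq0$ iff $u(x)-u(y)\geq0$, a diffusion coefficient $\sigma^2>0$, and a boundary function $b:\mathbb{R}^+\to\mathbb{R}^{++}$ which is either constant ($b\equiv B>0$, constant boundaries) or continuous and strictly decreasing with $\lim_{t\to\infty}b(t)=0$ (collapsing boundaries). For the pair $(x,y)$, the process $Z(0)=0$, $dZ(t)=\mu(x,y)dt+\sigma dW(t)$ ($W$ standard Brownian motion) runs until it first hits $b(t)$ or $-b(t)$; $x$ is chosen if $b(t)$ is hit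 first and $y$ if $-b(t)$ is hit first, the response time being the first hitting time. The generated SCF-RT has $p(x,y)$ the probability of choosing $x$ and $F(x,y)$ the cdf of the response time conditional on choosing $x$. For cdfs $G,H$ on $\mathbb{R}^+$ and $q>0$, $G$ $q$-FSD $H$ means $G(t)\leq qH(t)$ for all $t\geq0$; $q$-SFSD means additionally strict inequality for some $t$. *)

theory Defs
  imports "HOL-Probability.Probability"
begin

definition std_BM :: "'w measure \<Rightarrow> (real \<Rightarrow> 'w \<Rightarrow> real) \<Rightarrow> bool" where
  "std_BM M W \<longleftrightarrow>
     prob_space M \<and>
     (\<forall>t\<ge>0. W t \<in> borel_measurable M) \<and>
     (\<forall>\<omega>\<in>space M. W 0 \<omega> = 0 \<and> continuous_on {0..} (\<lambda>t. W t \<omega>)) \<and>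
     (\<forall>s t. 0 \<le> s \<and> s < t \<longrightarrow>
        distributed M lborel (\<lambda>\<omega>. W t \<omega> - W s \<omega>)
          (\<lambda>z. ennreal (normal_density 0 (sqrt (t - s)) z))) \<and>
     (\<forall>ts :: real list. sorted_wrt (<) ts \<and> (\<forall>t\<in>set ts. 0 \<le> t) \<longrightarrow>
        prob_space.indep_vars M (\<lambda>_. borel)
          (\<lambda>i \<omega>. W (ts ! Suc i) \<omega> - W (ts ! i) \<omega>) {..<length ts - 1})"

definition constant_boundary :: "(real \<Rightarrow> real) \<Rightarrow> bool" where
  "constant_boundary b \<longleftrightarrow> (\<exists>B>0. \<forall>t\<ge>0. b t = B)"

definition collapsing_boundary :: "(real \<Rightarrow> real) \<Rightarrow> bool" where
  "collapsing_boundary b \<longleftrightarrow>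
     (\<forall>t\<ge>0. b t > 0) \<and> continuous_on {0..} b \<and>
     (\<forall>s t. 0 \<le> s \<and> s < t \<longrightarrow> b t < b s) \<and> (b \<longlongrightarrow> 0) at_top"

definition ddm_proc :: "real \<Rightarrow> real \<Rightarrow> (real \<Rightarrow> 'w \<Rightarrow> real) \<Rightarrow> real \<Rightarrow> 'w \<Rightarrow> real" where
  "ddm_proc mu sg W t \<omega> = mu * t + sg * W t \<omega>"

definition first_hit_upper_at :: "(real \<Rightarrow> real) \<Rightarrow> (real \<Rightarrow> real) \<Rightarrow> real \<Rightarrow> bool" where
  "first_hit_upper_at b Z s \<longleftrightarrow> 0 \<le> s \<and> Z s = b s \<and> (\<forall>r\<in>{0..<s}. \<bar>Z r\<bar> < b r)"

text \<open>Event: upper option chosen with response time at most T.\<close>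
definition upper_by :: "real \<Rightarrow> real \<Rightarrow> (real \<Rightarrow> 'w \<Rightarrow> real) \<Rightarrow> (real \<Rightarrow> real) \<Rightarrow> real \<Rightarrow> 'w set" where
  "upper_by mu sg W b T = {\<omega>. \<exists>s\<le>T. first_hit_upper_at b (\<lambda>t. ddm_proc mu sg W t \<omega>) s}"

definition upper_chosen :: "real \<Rightarrow> real \<Rightarrow> (real \<Rightarrow> 'w \<Rightarrow> real) \<Rightarrow> (real \<Rightarrow> real) \<Rightarrow> 'w set" where
  "upper_chosen mu sg W b = {\<omega>. \<exists>s. first_hit_upper_at b (\<lambda>t. ddm_proc mu sg W t \<omega>) s}"

definition q_FSD :: "real \<Rightarrow> (real \<Rightarrow> real) \<Rightarrow> (real \<Rightarrow> real) \<Rightarrow> bool" where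
  "q_FSD q G H \<longleftrightarrow> (\<forall>t\<ge>0. G t \<le> q * H t)"

definition q_SFSD :: "real \<Rightarrow> (real \<Rightarrow> real) \<Rightarrow> (real \<Rightarrow> real) \<Rightarrow> bool" where
  "q_SFSD q G H \<longleftrightarrow> q_FSD q G H \<and> (\<exists>t\<ge>0. G t < q * H t)"

definition DDM_generates ::
  "('a \<times> 'a) set \<Rightarrow> ('a \<Rightarrow> real) \<Rightarrow> 'w measure \<Rightarrow> (real \<Rightarrow> 'w \<Rightarrow> real) \<Rightarrow>
   ('a \<Rightarrow> 'a \<Rightarrow> real) \<Rightarrow> real \<Rightarrow> (real \<Rightarrow> real) \<Rightarrow>
   ('a \<Rightarrow> 'a \<Rightarrow> real) \<Rightarrow> ('a \<Rightarrow> 'a \<Rightarrow> real \<Rightarrow> real) \<Rightarrow> bool" where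
  "DDM_generates D u M W mu sg b p F \<longleftrightarrow>
     std_BM M W \<and> sg > 0 \<and>
     (constant_boundary b \<or> collapsing_boundary b) \<and>
     (\<forall>(x,y)\<in>D. mu x y = - mu y x \<and> (mu x y \<ge> 0 \<longleftrightarrow> u x - u y \<ge> 0)) \<and>
     (\<forall>(x,y)\<in>D. p x y = measure M (upper_chosen (mu x y) sg W b \<inter> space M)) \<and>
     (\<forall>(x,y)\<in>D. \<forall>t\<ge>0. F x y t =
        measure M (upper_by (mu x y) sg W b t \<inter> space M) /
        measure M (upper_chosen (mu x y) sg W b \<inter> space M))"

end

theory Submission
  imports Defs "HOL-Real_Asymp.Real_Asymp"
begin

text \<open>
  Both processes of the pair \<open>(x, y)\<close> are driven by the same Brownian path: with \<open>\<mu> = mu x y \<ge> 0\<close>,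
  the diffusion \<open>\<mu> t + sg W t\<close> lies above \<open>-\<mu> t + sg W t\<close>, and exiting \<open>(-b, b)\<close> through \<open>b\<close>
  by time \<open>t\<close> is monotone in the path. Hence \<open>P(y chosen by t) \<le> P(x chosen by t)\<close>, and dividing
  by \<open>p(y, x)\<close> turns this into \<open>F(y, x) \<le> q F(x, y)\<close>. For \<open>\<mu> > 0\<close> the inequality is strict at
  \<open>t = 2 b(0)/\<mu>\<close>, because with positive probability \<open>W\<close> stays so close to \<open>0\<close> that the upper
  process reaches \<open>b\<close> while the lower one does not; a similar event shows \<open>p(y, x) > 0\<close>.
  That Brownian motion stays in any tube around a line with positive probability is proved by
  splitting time into \<open>N\<close> independent steps and bounding the oscillation within a step by dyadic
  chaining, using fourth moments of the Gaussian increments.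
\<close>

section \<open>Exit through the upper boundary of a continuous path\<close>

lemma first_hit_upper_atD:
  assumes "first_hit_upper_at b Z s" and "\<And>t. t \<ge> 0 \<Longrightarrow> b t > 0"
  shows "0 \<le> s" "b s \<le> Z s" "\<forall>r\<in>{0..s}. - b r < Z r"
proof -
  show s: "0 \<le> s" "b s \<le> Z s" using assms(1) unfolding first_hit_upper_at_def by auto
  have "Z s = b s" "\<forall>r\<in>{0..<s}. \<bar>Z r\<bar> < b r" using assms(1) unfolding first_hit_upper_at_def by auto
  then show "\<forall>r\<in>{0..s}. - b r < Z r" using assms(2)[OF s(1)] by force
qed

text \<open>The first exit time is the least point of the closed set where \<open>b \<le> Z\<close>; by the intermediate
  value theorem, starting from \<open>Z 0 = 0 < b 0\<close>, the path equals \<open>b\<close> there.\<close>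

lemma first_hit_upper_at_exists:
  fixes Z b :: "real \<Rightarrow> real"
  assumes Zc: "continuous_on {0..} Z" and bc: "continuous_on {0..} b"
    and bpos: "\<And>t. t \<ge> 0 \<Longrightarrow> b t > 0" and Z0: "Z 0 = 0"
    and s: "0 \<le> s" "b s \<le> Z s" and above: "\<forall>r\<in>{0..s}. - b r < Z r"
  shows "\<exists>\<tau>\<le>s. first_hit_upper_at b Z \<tau>"
proof -
  define S where "S = {r \<in> {0..s}. b r \<le> Z r}"
  have "closed S" unfolding S_def
    by (rule continuous_on_closed_Collect_le) (auto intro: continuous_on_subset[OF bc] continuous_on_subset[OF Zc])
  moreover have "s \<in> S" "bdd_below S" using s unfolding S_def by (auto intro: bdd_belowI[of _ 0])
  ultimately have "Inf S \<in> S" using closed_contains_Inf by blast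
  define \<tau> where "\<tau> = Inf S"
  have le_S: "\<tau> \<le> r" if "r \<in> S" for r unfolding \<tau>_def using that \<open>bdd_below S\<close> by (rule cInf_lower)
  have \<tau>: "0 \<le> \<tau>" "\<tau> \<le> s" "b \<tau> \<le> Z \<tau>" using \<open>Inf S \<in> S\<close> unfolding S_def \<tau>_def by auto
  have "continuous_on {0..\<tau>} (\<lambda>r. Z r - b r)"
    by (intro continuous_intros continuous_on_subset[OF Zc] continuous_on_subset[OF bc]) auto
  then obtain r where r: "0 \<le> r" "r \<le> \<tau>" "Z r - b r = 0"
    using IVT'[of "\<lambda>r. Z r - b r" 0 0 \<tau>] \<tau> Z0 bpos[of 0] by auto
  then have "r \<in> S" using \<tau> unfolding S_def by auto
  with r le_S have "Z \<tau> = b \<tau>" by force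
  moreover have "\<bar>Z r\<bar> < b r" if "r \<in> {0..<\<tau>}" for r
  proof -
    have "r \<notin> S" using le_S that by force
    moreover have "r \<in> {0..s}" using that \<tau> by auto
    moreover from this have "- b r < Z r" using above by blast
    ultimately show ?thesis unfolding S_def by (auto simp: abs_less_iff)
  qed
  ultimately show ?thesis using \<tau> unfolding first_hit_upper_at_def by auto
qed

lemma ex_first_hit_upper_iff:
  fixes Z b :: "real \<Rightarrow> real"
  assumes "continuous_on {0..} Z" "continuous_on {0..} b" "\<And>t. t \<ge> 0 \<Longrightarrow> b t > 0" "Z 0 = 0"
  shows "(\<exists>s\<le>T. first_hit_upper_at b Z s) \<longleftrightarrow>
         (\<exists>s\<in>{0..T}. b s \<le> Z s \<and> (\<forall>r\<in>{0..s}. - b r < Z r))"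
proof
  assume "\<exists>s\<le>T. first_hit_upper_at b Z s"
  then obtain s where "s \<le> T" "first_hit_upper_at b Z s" by blast
  with first_hit_upper_atD[of b Z s] assms(3) show "\<exists>s\<in>{0..T}. b s \<le> Z s \<and> (\<forall>r\<in>{0..s}. - b r < Z r)"
    by auto
next
  assume "\<exists>s\<in>{0..T}. b s \<le> Z s \<and> (\<forall>r\<in>{0..s}. - b r < Z r)"
  then obtain s where "s \<in> {0..T}" "b s \<le> Z s" "\<forall>r\<in>{0..s}. - b r < Z r" by blast
  with first_hit_upper_at_exists[OF assms] show "\<exists>s\<le>T. first_hit_upper_at b Z s"
    by (meson atLeastAtMost_iff order.trans)
qed

lemma ex_first_hit_upper_mono:
  fixes Z Z' b :: "real \<Rightarrow> real"
  assumes "continuous_on {0..} Z'" "continuous_on {0..} b" "\<And>t. t \<ge> 0 \<Longrightarrow> b t > 0" "Z' 0 = 0"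
    and le: "\<And>t. t \<ge> 0 \<Longrightarrow> Z t \<le> Z' t"
    and "\<exists>s\<le>T. first_hit_upper_at b Z s"
  shows "\<exists>s\<le>T. first_hit_upper_at b Z' s"
proof -
  obtain s where "s \<le> T" "first_hit_upper_at b Z s" using assms(6) by blast
  with first_hit_upper_atD[of b Z s] assms(3) have "0 \<le> s" "b s \<le> Z s" "\<forall>r\<in>{0..s}. - b r < Z r"
    by auto
  with le have "b s \<le> Z' s" "\<forall>r\<in>{0..s}. - b r < Z' r" by (auto intro: order_trans less_le_trans)
  with first_hit_upper_at_exists[OF assms(1-4) \<open>0 \<le> s\<close>] \<open>s \<le> T\<close> show ?thesis
    by (meson order.trans)
qed

section \<open>Countable description of the exit events\<close>

definition rat_upto :: "real \<Rightarrow> real set" where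
  "rat_upto x = {r. 0 \<le> r \<and> r \<le> x \<and> (r \<in> \<rat> \<or> r = x)}"

lemma countable_rat_upto: "countable (rat_upto x)"
proof -
  have "rat_upto x \<subseteq> insert x \<rat>" unfolding rat_upto_def by auto
  then show ?thesis using countable_rat by (metis countable_insert countable_subset)
qed

lemma rat_upto_nonneg: "r \<in> rat_upto x \<Longrightarrow> 0 \<le> r"
  unfolding rat_upto_def by simp

lemma continuous_on_ge_if_ge_on_rat_upto:
  fixes g :: "real \<Rightarrow> real"
  assumes g: "continuous_on {0..x} g" and ge: "\<forall>r\<in>rat_upto x. c \<le> g r"
  shows "\<forall>r\<in>{0..x}. c \<le> g r"
proof
  fix r assume r: "r \<in> {0..x}"
  show "c \<le> g r"
  proof (cases "r = x")
    case True
    then show ?thesis using ge r unfolding rat_upto_def by auto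
  next
    case False
    show ?thesis
    proof (rule ccontr)
      assume "\<not> c \<le> g r"
      then obtain d where d: "d > 0" "\<forall>y\<in>{0..x}. dist y r < d \<longrightarrow> dist (g y) (g r) < c - g r"
        using g r unfolding continuous_on_iff by (meson diff_gt_0_iff_gt not_le)
      obtain y where y: "y \<in> \<rat>" "r < y" "y < min (r + d) x"
        using Rats_dense_in_real[of r "min (r + d) x"] False r d by auto
      then have "c \<le> g y" using ge r unfolding rat_upto_def by auto
      moreover have "dist (g y) (g r) < c - g r" using d y r by (auto simp: dist_real_def)
      ultimately show False by (auto simp: dist_real_def)
    qed
  qed
qed

lemma exit_condition_imp_rat:
  fixes ps ch :: "real \<Rightarrow> real"
  assumes ps_c: "continuous_on {0..} ps" and ch_c: "continuous_on {0..} ch"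
    and s: "s \<in> {0..T}" "0 \<le> ps s" "\<forall>r\<in>{0..s}. 0 < ch r"
  shows "\<exists>n::nat. \<forall>k::nat. \<exists>q\<in>rat_upto T. - inverse (real (Suc k)) < ps q \<and>
           (\<forall>r\<in>rat_upto q. inverse (real (Suc n)) \<le> ch r)"
proof -
  have "\<exists>x\<in>{0..s}. \<forall>y\<in>{0..s}. ch x \<le> ch y"
    by (rule continuous_attains_inf) (use s in \<open>auto intro: continuous_on_subset[OF ch_c]\<close>)
  then obtain x0 where x0: "x0 \<in> {0..s}" "\<forall>y\<in>{0..s}. ch x0 \<le> ch y" by blast
  have "ch x0 > 0" using s x0 by auto
  then obtain n where n: "inverse (real (Suc n)) < ch x0" using reals_Archimedean by blast
  have "\<exists>q\<in>rat_upto T. - inverse (real (Suc k)) < ps q \<and> (\<forall>r\<in>rat_upto q. inverse (real (Suc n)) \<le> ch r)"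
    for k :: nat
  proof -
    have ek: "inverse (real (Suc k)) > 0" by simp
    have "\<exists>q\<in>rat_upto T. q \<le> s \<and> - inverse (real (Suc k)) < ps q"
    proof (cases "s = 0")
      case True
      have "- inverse (real (Suc k)) < ps s" using s(2) ek by linarith
      moreover have "0 \<in> rat_upto T" using s unfolding rat_upto_def by auto
      ultimately show ?thesis using True by auto
    next
      case False
      have "\<forall>e>0. \<exists>d>0. \<forall>y\<in>{0..}. dist y s < d \<longrightarrow> dist (ps y) (ps s) < e"
        by (rule bspec[OF ps_c[unfolded continuous_on_iff]]) (use s in auto)
      then obtain d where d: "d > 0" "\<forall>y\<in>{0..}. dist y s < d \<longrightarrow> dist (ps y) (ps s) < inverse (real (Suc k))"
        using ek by blast
      obtain q where q: "q \<in> \<rat>" "max 0 (s - d) < q" "q < s"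
        using Rats_dense_in_real[of "max 0 (s - d)" s] False s d by auto
      then have "- inverse (real (Suc k)) < ps q"
        using d(2)[rule_format, of q] s by (auto simp: dist_real_def)
      moreover have "q \<in> rat_upto T" using q s unfolding rat_upto_def by auto
      ultimately show ?thesis using q by (intro bexI[of _ q]) auto
    qed
    moreover have "inverse (real (Suc n)) \<le> ch r" if "q \<le> s" "r \<in> rat_upto q" for q r
    proof -
      have "r \<in> {0..s}" using that unfolding rat_upto_def by auto
      then show ?thesis using x0(2) n by force
    qed
    ultimately show ?thesis by blast
  qed
  then show ?thesis by blast
qed

text \<open>A limit point of the witnesses \<open>q\<close> is a point where \<open>ps \<ge> 0\<close>, and the uniform bound
  \<open>1/(n+1) \<le> ch\<close> on the rationals before it persists by continuity.\<close>

lemma rat_imp_exit_condition: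
  fixes ps ch :: "real \<Rightarrow> real"
  assumes ps_c: "continuous_on {0..} ps" and ch_c: "continuous_on {0..} ch"
    and lt: "\<And>r. r \<ge> 0 \<Longrightarrow> ps r < ch r"
    and n: "\<forall>k::nat. \<exists>q\<in>rat_upto T. - inverse (real (Suc k)) < ps q \<and>
              (\<forall>r\<in>rat_upto q. inverse (real (Suc n)) \<le> ch r)"
  shows "\<exists>s\<in>{0..T}. 0 \<le> ps s \<and> (\<forall>r\<in>{0..s}. 0 < ch r)"
proof -
  obtain q where q: "\<And>k. q k \<in> rat_upto T" "\<And>k. - inverse (real (Suc k)) < ps (q k)"
    "\<And>k. \<forall>r\<in>rat_upto (q k). inverse (real (Suc n)) \<le> ch r"
    using choice[OF n[unfolded Bex_def]] by blast
  have qT: "q k \<in> {0..T}" for k using q(1)[of k] unfolding rat_upto_def by auto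
  obtain l r where l: "l \<in> {0..T}" "strict_mono r" "(q \<circ> r) \<longlonglongrightarrow> l"
    using compact_imp_seq_compact[OF compact_Icc, of 0 T] qT unfolding seq_compact_def by meson
  have "(\<lambda>k. ps ((q \<circ> r) k)) \<longlonglongrightarrow> ps l"
    by (rule continuous_on_tendsto_compose[OF ps_c l(3)]) (use l qT in auto)
  moreover have "(\<lambda>k. - inverse (real (Suc k))) \<longlonglongrightarrow> - 0"
    by (intro tendsto_minus LIMSEQ_inverse_real_of_nat)
  moreover have "- inverse (real (Suc k)) \<le> ps ((q \<circ> r) k)" for k
  proof -
    have "inverse (real (Suc (r k))) \<le> inverse (real (Suc k))"
      using seq_suble[OF l(2), of k] by (intro le_imp_inverse_le) auto
    then show ?thesis using q(2)[of "r k"] unfolding o_apply by linarith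
  qed
  ultimately have ps_l: "0 \<le> ps l" by (simp add: LIMSEQ_le)
  have "0 < ch x" if x: "x \<in> {0..l}" for x
  proof (cases "x = l")
    case True
    then show ?thesis using lt[of l] ps_l l by auto
  next
    case False
    then have "eventually (\<lambda>k. dist ((q \<circ> r) k) l < l - x) sequentially"
      using l(3) x by (auto simp: tendsto_iff)
    then obtain k where "dist ((q \<circ> r) k) l < l - x" unfolding eventually_sequentially by auto
    then have "x \<le> q (r k)" by (auto simp: dist_real_def)
    moreover have "\<forall>y\<in>{0..q (r k)}. inverse (real (Suc n)) \<le> ch y"
      by (rule continuous_on_ge_if_ge_on_rat_upto[OF continuous_on_subset[OF ch_c] q(3)]) auto
    ultimately have "inverse (real (Suc n)) \<le> ch x" using x by auto
    then show ?thesis by (meson inverse_positive_iff_positive less_le_trans of_nat_0_less_iff zero_less_Suc)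
  qed
  then show ?thesis using l ps_l by blast
qed

lemma exit_condition_iff_rat:
  fixes ps ch :: "real \<Rightarrow> real"
  assumes "continuous_on {0..} ps" "continuous_on {0..} ch" "\<And>r. r \<ge> 0 \<Longrightarrow> ps r < ch r"
  shows "(\<exists>s\<in>{0..T}. 0 \<le> ps s \<and> (\<forall>r\<in>{0..s}. 0 < ch r)) \<longleftrightarrow>
    (\<exists>n::nat. \<forall>k::nat. \<exists>q\<in>rat_upto T. - inverse (real (Suc k)) < ps q \<and>
        (\<forall>r\<in>rat_upto q. inverse (real (Suc n)) \<le> ch r))"
  using exit_condition_imp_rat[OF assms(1,2)] rat_imp_exit_condition[OF assms] by blast

section \<open>Dyadic chaining\<close>

lemma dyadic_chain_le:
  fixes w :: "real \<Rightarrow> real" and rs :: "nat \<Rightarrow> real"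
  assumes "\<forall>m\<le>n. \<forall>i<(2::nat)^m. \<bar>w (s + real (Suc i) * h / 2^m) - w (s + real i * h / 2^m)\<bar> \<le> rs m"
    and "j \<le> 2^n"
  shows "\<bar>w (s + real j * h / 2^n) - w s\<bar> \<le> (\<Sum>m\<le>n. rs m)"
  using assms
proof (induction n arbitrary: j)
  case 0
  then have "j = 0 \<or> j = 1" by auto
  then show ?case using "0.prems"(1) by auto
next
  case (Suc n)
  have step: "\<bar>w (s + real (Suc i) * h / 2^Suc n) - w (s + real i * h / 2^Suc n)\<bar> \<le> rs (Suc n)"
    if "i < 2^Suc n" for i
    using Suc.prems(1) that by blast
  have "0 \<le> rs (Suc n)" using order_trans[OF abs_ge_zero step[of 0]] by simp
  have half: "s + real (2 * i) * h / 2 ^ Suc n = s + real i * h / 2^n" for i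
    by (simp add: field_simps)
  define i where "i = j div 2"
  have i: "j = 2 * i \<or> j = Suc (2 * i)" unfolding i_def by presburger
  then have "i \<le> 2^n" using Suc.prems(2) by auto
  then have IH: "\<bar>w (s + real i * h / 2^n) - w s\<bar> \<le> (\<Sum>m\<le>n. rs m)"
    using Suc.IH Suc.prems(1) by simp
  show ?case
  proof (cases "j = 2 * i")
    case True
    then show ?thesis using IH half \<open>0 \<le> rs (Suc n)\<close> by simp
  next
    case False
    then have "j = Suc (2 * i)" "2 * i < 2 ^ Suc n" using i Suc.prems(2) by auto
    then show ?thesis using IH step[of "2 * i"] half by simp
  qed
qed

lemma dyadic_chaining_le:
  fixes w :: "real \<Rightarrow> real" and rs :: "nat \<Rightarrow> real"
  assumes incr: "\<forall>m. \<forall>i<(2::nat)^m. \<bar>w (s + real (Suc i) * h / 2^m) - w (s + real i * h / 2^m)\<bar> \<le> rs m"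
    and sum_le: "\<And>n. (\<Sum>m\<le>n. rs m) \<le> \<rho>"
    and w: "continuous_on {s..s+h} w" and h: "h > 0" and r: "r \<in> {s..s+h}"
  shows "\<bar>w r - w s\<bar> \<le> \<rho>"
proof -
  define j where "j n = nat \<lfloor>(r - s) / h * 2^n\<rfloor>" for n
  define x where "x n = s + real (j n) * h / 2^n" for n
  have "0 \<le> (r - s) / h * 2^n" for n :: nat using r h by simp
  then have j: "real (j n) \<le> (r - s) / h * 2^n" "(r - s) / h * 2^n < real (j n) + 1" for n
    unfolding j_def by (simp_all add: of_nat_floor)
  have "(r - s) / h * 2^n \<le> 1 * 2^n" for n :: nat
    using r h by (intro mult_right_mono) auto
  then have j_le: "j n \<le> 2^n" for n
    using j(1)[of n] by (metis of_nat_le_iff of_nat_numeral of_nat_power order_trans mult_1)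
  have x: "x n \<le> r" "r - x n < h / 2^n" for n
  proof -
    have eq: "r - x n = ((r - s) / h * 2^n - real (j n)) * h / 2^n"
      unfolding x_def using h by (simp add: field_simps)
    have "0 \<le> ((r - s) / h * 2^n - real (j n)) * h / 2^n" using j(1)[of n] h by simp
    then show "x n \<le> r" using eq by simp
    have "((r - s) / h * 2^n - real (j n)) * h / 2^n < 1 * h / 2^n"
      using j(2)[of n] h by (intro divide_strict_right_mono mult_strict_right_mono) auto
    then show "r - x n < h / 2^n" using eq by simp
  qed
  have x_in: "x n \<in> {s..s+h}" for n
    using x(1)[of n] r h unfolding x_def by auto
  have "(\<lambda>n. h / 2^n) \<longlonglongrightarrow> 0" by (rule LIMSEQ_divide_realpow_zero) auto
  then have "(\<lambda>n. x n - r) \<longlonglongrightarrow> 0"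
    by (rule Lim_null_comparison[rotated]) (use x in \<open>auto intro!: always_eventually simp: less_imp_le\<close>)
  then have "x \<longlonglongrightarrow> r" by (simp add: LIM_zero_cancel)
  then have "(\<lambda>n. \<bar>w (x n) - w s\<bar>) \<longlonglongrightarrow> \<bar>w r - w s\<bar>"
    by (intro tendsto_intros continuous_on_tendsto_compose[OF w]) (use r x_in in auto)
  moreover have "\<bar>w (x n) - w s\<bar> \<le> \<rho>" for n
    using dyadic_chain_le[of n w s h rs "j n"] incr j_le sum_le[of n] unfolding x_def by auto
  ultimately show ?thesis by (intro LIMSEQ_le_const2) auto
qed

lemma tube_from_grid:
  fixes w :: "real \<Rightarrow> real"
  assumes w0: "w 0 = 0" and h: "h > 0" and N: "N \<ge> 1"
    and step: "\<And>k. k < N \<Longrightarrow> \<bar>w (real (Suc k) * h) - w (real k * h) - a * h\<bar> \<le> \<eta>"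
    and osc: "\<And>k r. k < N \<Longrightarrow> r \<in> {real k * h..real k * h + h} \<Longrightarrow> \<bar>w r - w (real k * h)\<bar> \<le> \<rho>"
    and r: "r \<in> {0..real N * h}"
  shows "\<bar>w r - a * r\<bar> \<le> real N * \<eta> + \<rho> + \<bar>a\<bar> * h"
proof -
  have grid: "\<bar>w (real k * h) - a * (real k * h)\<bar> \<le> real k * \<eta>" if "k \<le> N" for k
    using that
  proof (induction k)
    case 0
    then show ?case using w0 by simp
  next
    case (Suc k)
    have "a * (real (Suc k) * h) = a * (real k * h) + a * h" "real (Suc k) * \<eta> = real k * \<eta> + \<eta>"
      by (simp_all add: algebra_simps)
    then show ?case using Suc step[of k] by linarith
  qed
  define k where "k = min (N - 1) (nat \<lfloor>r / h\<rfloor>)"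
  have k: "k < N" "real k * h \<le> r" "r \<le> real k * h + h"
  proof -
    show "k < N" unfolding k_def using N by auto
    have "real k \<le> real (nat \<lfloor>r / h\<rfloor>)" unfolding k_def by simp
    also have "\<dots> \<le> r / h" using r h by simp
    finally show "real k * h \<le> r" using h by (simp add: field_simps)
    show "r \<le> real k * h + h"
    proof (cases "nat \<lfloor>r / h\<rfloor> \<le> N - 1")
      case True
      then have "r / h < real k + 1" unfolding k_def using r h by simp
      then show ?thesis using h by (simp add: field_simps)
    next
      case False
      then have "real k * h + h = real N * h" unfolding k_def using N by (simp add: of_nat_diff algebra_simps)
      then show ?thesis using r by simp
    qed
  qed
  have "real k * \<eta> \<le> real N * \<eta>"
    using k(1) step[of 0] N by (intro mult_right_mono) (auto intro: order_trans[OF abs_ge_zero])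
  moreover have "\<bar>a * r - a * (real k * h)\<bar> \<le> \<bar>a\<bar> * h"
    using k(2,3) by (auto simp: abs_mult right_diff_distrib[symmetric] intro!: mult_left_mono)
  moreover have "\<bar>w r - w (real k * h)\<bar> \<le> \<rho>" using osc[OF k(1)] k(2,3) by simp
  moreover have "\<bar>w (real k * h) - a * (real k * h)\<bar> \<le> real k * \<eta>" using grid k(1) by simp
  ultimately show ?thesis by linarith
qed

section \<open>Brownian motion stays close to a line with positive probability\<close>

lemma block_sizes_exist:
  fixes a \<delta> T :: real
  assumes \<delta>: "\<delta> > 0" and T: "T > 0"
  shows "\<exists>N::nat. (1::nat) \<le> N \<and> (\<bar>a\<bar> + 1) * (T / N) < \<delta> / 3 \<and>
    86016 * (T / N)\<^sup>2 / (\<delta> / 3) ^ 4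
      < 2 * (\<delta> / (3 * N)) * normal_density 0 (sqrt (T / N)) (\<bar>a * (T / N)\<bar> + \<delta> / (3 * N))"
proof -
  define C where "C = 2 * \<delta> / 3 / sqrt (2 * pi * T)"
  define c where "c = (\<bar>a\<bar> * T + \<delta> / 3)\<^sup>2 / (2 * T)"
  define K where "K = 86016 * T\<^sup>2 / (\<delta> / 3) ^ 4"
  have "\<bar>a\<bar> * T + \<delta> / 3 > 0" using \<delta> T by (intro add_nonneg_pos) auto
  then have "K > 0" "C > 0" "c > 0" "(\<bar>a\<bar> + 1) * T > 0"
    unfolding K_def C_def c_def using \<delta> T by (auto intro: add_nonneg_pos)
  then have "eventually (\<lambda>N::nat. K / real N ^ 2 < C / real N * exp (- (c / real N)) / sqrt (1 / real N)) at_top"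
    and "eventually (\<lambda>N::nat. (\<bar>a\<bar> + 1) * T / real N < \<delta> / 3) at_top"
    using \<delta> by real_asymp+
  moreover have "eventually (\<lambda>N::nat. 1 \<le> N) at_top" by (rule eventually_ge_at_top)
  ultimately have "eventually (\<lambda>N::nat. K / real N ^ 2 < C / real N * exp (- (c / real N)) / sqrt (1 / real N) \<and>
      (\<bar>a\<bar> + 1) * T / real N < \<delta> / 3 \<and> 1 \<le> N) at_top"
    by eventually_elim auto
  then obtain N :: nat where N: "K / real N ^ 2 < C / real N * exp (- (c / real N)) / sqrt (1 / real N)"
    "(\<bar>a\<bar> + 1) * T / real N < \<delta> / 3" "1 \<le> N"
    using eventually_happens'[OF sequentially_bot] by blast
  then have "real N > 0" by simp
  have "K / real N ^ 2 = 86016 * (T / N)\<^sup>2 / (\<delta> / 3) ^ 4"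
    unfolding K_def by (simp add: power_divide)
  moreover have "C / real N * exp (- (c / real N)) / sqrt (1 / real N)
      = 2 * (\<delta> / (3 * N)) * normal_density 0 (sqrt (T / N)) (\<bar>a * (T / N)\<bar> + \<delta> / (3 * N))"
  proof -
    have "\<bar>a * (T / N)\<bar> + \<delta> / (3 * N) = (\<bar>a\<bar> * T + \<delta> / 3) / N"
      using T \<open>real N > 0\<close> by (simp add: abs_mult field_simps)
    moreover have "((\<bar>a\<bar> * T + \<delta> / 3) / N)\<^sup>2 / (2 * (T / N)) = c / N"
      unfolding c_def using T \<open>real N > 0\<close> by (simp add: power2_eq_square field_simps)
    moreover have "sqrt (2 * pi * (T / N)) = sqrt (2 * pi * T) * sqrt (1 / N)"
      by (simp add: real_sqrt_mult[symmetric])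
    ultimately show ?thesis
      using T unfolding normal_density_def C_def by (simp add: field_simps)
  qed
  ultimately show ?thesis using N by auto
qed

text \<open>The radii \<open>rs m = \<rho>/8 (7/8)\<^sup>m\<close> sum to at most \<open>\<rho>\<close>, while the Markov bounds
  \<open>2\<^sup>m \<cdot> 3 (h/2\<^sup>m)\<^sup>2 / rs m\<^sup>4\<close> for the \<open>2\<^sup>m\<close> dyadic increments of level \<open>m\<close> form a geometric
  series of ratio \<open>2048/2401\<close>, of order \<open>h\<^sup>2\<close>.\<close>

lemma sum_dyadic_radii_le:
  assumes "\<rho> \<ge> 0"
  shows "(\<Sum>m\<le>n. \<rho> / 8 * (7/8::real)^m) \<le> \<rho>"
proof -
  have "(\<Sum>m\<le>n. \<rho> / 8 * (7/8::real)^m) = \<rho> / 8 * ((1 - (7/8)^Suc n) / (1 - 7/8))"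
    by (simp only: sum_distrib_left[symmetric] lessThan_Suc_atMost[symmetric] sum_gp_strict) simp
  also have "\<dots> = \<rho> * (1 - (7/8)^Suc n)" by simp
  also have "\<dots> \<le> \<rho>" using assms by (simp add: mult_left_le)
  finally show ?thesis .
qed

lemma sum_dyadic_tail_bounds_le:
  assumes "\<rho> > 0"
  shows "(\<Sum>m\<le>n. real (2^m) * (3 * (h / 2^m)\<^sup>2 / (\<rho> / 8 * (7/8::real)^m) ^ 4)) \<le> 86016 * h\<^sup>2 / \<rho>^4"
proof -
  have summand: "real (2^m) * (3 * (h / 2^m)\<^sup>2 / (\<rho> / 8 * (7/8::real)^m) ^ 4)
      = 3 * 4096 * h\<^sup>2 / \<rho>^4 * (2048/2401)^m" for m
  proof -
    have pw: "((x::real)^m)^k = (x^k)^m" for x k by (simp flip: power_mult add: mult.commute)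
    have "(2048/2401::real)^m = (2 * 4096 / (4 * 2401))^m" by simp
    then have ratio: "(2048/2401::real)^m = 2^m * 4096^m / (4^m * 2401^m)"
      by (simp only: power_divide power_mult_distrib)
    have radius: "(\<rho> / 8 * (7/8::real)^m) ^ 4 = \<rho>^4 / 4096 * (2401/4096)^m"
      by (simp add: power_mult_distrib pw power_divide)
    have step: "(h / 2^m)\<^sup>2 = h\<^sup>2 / 4^m" by (simp add: power_divide pw)
    show ?thesis unfolding ratio radius step using assms by (simp add: field_simps power_divide)
  qed
  have "(\<Sum>m<Suc n. (2048/2401::real)^m) = (1 - (2048/2401)^Suc n) / (1 - 2048/2401)"
    by (subst sum_gp_strict) simp_all
  also have "\<dots> \<le> 1 / (1 - 2048/2401)" by (intro divide_right_mono) auto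
  finally have "(\<Sum>m<Suc n. (2048/2401::real)^m) \<le> 1 / (1 - 2048/2401)" .
  then have "(\<Sum>m\<le>n. real (2^m) * (3 * (h / 2^m)\<^sup>2 / (\<rho> / 8 * (7/8::real)^m) ^ 4))
      \<le> 3 * 4096 * h\<^sup>2 / \<rho>^4 * (1 / (1 - 2048/2401))"
    unfolding summand sum_distrib_left[symmetric] lessThan_Suc_atMost[symmetric]
    using assms by (intro mult_left_mono) auto
  also have "\<dots> = 29503488 / 353 * (h\<^sup>2 / \<rho>^4)" by simp
  also have "\<dots> \<le> 86016 * (h\<^sup>2 / \<rho>^4)" by (intro mult_right_mono) auto
  finally show ?thesis by simp
qed

definition block_ok :: "nat \<Rightarrow> real \<Rightarrow> real \<Rightarrow> (nat \<Rightarrow> real) \<Rightarrow> nat \<Rightarrow> (nat \<Rightarrow> real) \<Rightarrow> bool" where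
  "block_ok n c \<eta> rs k f \<longleftrightarrow>
     \<bar>(\<Sum>i\<in>{k * 2^n..<Suc k * 2^n}. f i) - c\<bar> \<le> \<eta> \<and>
     (\<forall>m\<le>n. \<forall>i<(2::nat)^m. \<bar>\<Sum>j\<in>{k * 2^n + i * 2^(n-m)..<k * 2^n + Suc i * 2^(n-m)}. f j\<bar> \<le> rs m)"

lemma dyadic_subblock_subset:
  assumes "m \<le> n" "i < 2^m"
  shows "{k * 2^n + i * 2^(n-m)..<k * 2^n + Suc i * 2^(n-m)} \<subseteq> {k * 2^n..<Suc k * 2^n :: nat}"
proof -
  have "Suc i * 2^(n-m) \<le> 2^m * 2^(n-m)" using assms by (intro mult_right_mono) auto
  also have "\<dots> = 2^n" using assms by (simp flip: power_add)
  finally show ?thesis by auto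
qed

lemma block_ok_cong:
  assumes "\<And>i. i \<in> {k * 2^n..<Suc k * 2^n} \<Longrightarrow> f i = g i"
  shows "block_ok n c \<eta> rs k f = block_ok n c \<eta> rs k g"
proof -
  have "(\<Sum>j\<in>{k * 2^n + i * 2^(n-m)..<k * 2^n + Suc i * 2^(n-m)}. f j)
      = (\<Sum>j\<in>{k * 2^n + i * 2^(n-m)..<k * 2^n + Suc i * 2^(n-m)}. g j)" if "m \<le> n" "i < 2^m" for m i
    using assms dyadic_subblock_subset[OF that] by (intro sum.cong) auto
  moreover have "(\<Sum>i\<in>{k * 2^n..<Suc k * 2^n}. f i) = (\<Sum>i\<in>{k * 2^n..<Suc k * 2^n}. g i)"
    using assms by (intro sum.cong) auto
  ultimately show ?thesis unfolding block_ok_def by (metis (no_types, lifting))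
qed

lemma sets_block_ok:
  "{f\<in>space (PiM {k * 2^n..<Suc k * 2^n} (\<lambda>_. borel)). block_ok n c \<eta> rs k f}
     \<in> sets (PiM {k * 2^n..<Suc k * 2^n} (\<lambda>_. borel))"
proof -
  have sum_measurable: "(\<lambda>f. \<Sum>j\<in>A. f j) \<in> borel_measurable (PiM {k * 2^n..<Suc k * 2^n} (\<lambda>_. (borel :: real measure)))"
    if "A \<subseteq> {k * 2^n..<Suc k * 2^n}" for A
    using that by (intro borel_measurable_sum) (auto intro!: measurable_component_singleton)
  show ?thesis
    unfolding block_ok_def
    using sum_measurable[OF order_refl] sum_measurable[OF dyadic_subblock_subset] by measurable
qed

lemma normal_density_le_of_abs_le:
  assumes "\<sigma> > 0" "\<bar>x\<bar> \<le> A"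
  shows "normal_density 0 \<sigma> A \<le> normal_density 0 \<sigma> x"
proof -
  have "x\<^sup>2 \<le> A\<^sup>2" using assms(2) by (metis abs_le_square_iff abs_of_nonneg abs_ge_zero order_trans)
  then have "- (A\<^sup>2) / (2 * \<sigma>\<^sup>2) \<le> - (x\<^sup>2) / (2 * \<sigma>\<^sup>2)"
    using assms(1) by (intro divide_right_mono) auto
  then have "exp (- (A\<^sup>2) / (2 * \<sigma>\<^sup>2)) \<le> exp (- (x\<^sup>2) / (2 * \<sigma>\<^sup>2))" by simp
  then show ?thesis unfolding normal_density_def by (simp add: divide_right_mono)
qed

locale brownian_motion =
  fixes M :: "'w measure" and W :: "real \<Rightarrow> 'w \<Rightarrow> real"
  assumes std_BM: "std_BM M W"
begin

sublocale prob_space M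
  using std_BM unfolding std_BM_def by simp

lemma W_measurable: "t \<ge> 0 \<Longrightarrow> W t \<in> borel_measurable M"
  using std_BM unfolding std_BM_def by simp

lemma W_zero: "\<omega> \<in> space M \<Longrightarrow> W 0 \<omega> = 0"
  using std_BM unfolding std_BM_def by simp

lemma W_continuous: "\<omega> \<in> space M \<Longrightarrow> continuous_on {0..} (\<lambda>t. W t \<omega>)"
  using std_BM unfolding std_BM_def by simp

lemma increment_distributed:
  "0 \<le> s \<Longrightarrow> s < t \<Longrightarrow>
    distributed M lborel (\<lambda>\<omega>. W t \<omega> - W s \<omega>) (\<lambda>z. ennreal (normal_density 0 (sqrt (t - s)) z))"
  using std_BM unfolding std_BM_def by simp

lemma sets_increment_near:
  "0 \<le> s \<Longrightarrow> 0 \<le> t \<Longrightarrow> {\<omega>\<in>space M. \<bar>W t \<omega> - W s \<omega> - c\<bar> \<le> e} \<in> events"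
  using W_measurable[of s] W_measurable[of t] by measurable

lemma sets_increment_large:
  "0 \<le> s \<Longrightarrow> 0 \<le> t \<Longrightarrow> {\<omega>\<in>space M. e < \<bar>W t \<omega> - W s \<omega>\<bar>} \<in> events"
  using W_measurable[of s] W_measurable[of t] by measurable

lemma prob_increment_near_ge:
  assumes st: "0 \<le> s" "s < t" and \<eta>: "\<eta> > 0"
  shows "2 * \<eta> * normal_density 0 (sqrt (t - s)) (\<bar>c\<bar> + \<eta>)
      \<le> prob {\<omega>\<in>space M. \<bar>W t \<omega> - W s \<omega> - c\<bar> \<le> \<eta>}"
proof -
  let ?X = "\<lambda>\<omega>. W t \<omega> - W s \<omega>"
  let ?f = "normal_density 0 (sqrt (t - s))"
  let ?v = "?f (\<bar>c\<bar> + \<eta>)"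
  have "(\<integral>\<^sup>+x\<in>{c - \<eta>..c + \<eta>}. ennreal ?v \<partial>lborel) = ennreal ?v * ennreal (2 * \<eta>)"
    using \<eta> by (simp add: nn_integral_cmult_indicator emeasure_lborel_Icc)
  then have "ennreal (2 * \<eta> * ?v) = (\<integral>\<^sup>+x\<in>{c - \<eta>..c + \<eta>}. ennreal ?v \<partial>lborel)"
    using \<eta> by (simp add: ennreal_mult'[symmetric] mult.commute)
  also have "\<dots> \<le> (\<integral>\<^sup>+x\<in>{c - \<eta>..c + \<eta>}. ennreal (?f x) \<partial>lborel)"
    using st by (intro nn_integral_mono) (auto simp: indicator_def intro!: ennreal_leI normal_density_le_of_abs_le)
  also have "\<dots> = emeasure M (?X -` {c - \<eta>..c + \<eta>} \<inter> space M)"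
    by (rule distributed_emeasure[OF increment_distributed[OF st], symmetric]) simp
  also have "?X -` {c - \<eta>..c + \<eta>} \<inter> space M = {\<omega>\<in>space M. \<bar>W t \<omega> - W s \<omega> - c\<bar> \<le> \<eta>}"
    by auto
  finally show ?thesis by (simp add: emeasure_eq_measure ennreal_le_iff)
qed

text \<open>Markov's inequality for the fourth moment \<open>3 (t - s)\<^sup>2\<close> of the increment.\<close>

lemma prob_increment_large_le:
  assumes st: "0 \<le> s" "s < t" and \<rho>: "\<rho> > 0"
  shows "prob {\<omega>\<in>space M. \<rho> < \<bar>W t \<omega> - W s \<omega>\<bar>} \<le> 3 * (t - s)\<^sup>2 / \<rho> ^ 4"
proof -
  let ?X = "\<lambda>\<omega>. W t \<omega> - W s \<omega>"
  define \<sigma> where "\<sigma> = sqrt (t - s)"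
  have \<sigma>: "\<sigma> > 0" "\<sigma>\<^sup>2 = t - s" unfolding \<sigma>_def using st by auto
  let ?f = "normal_density 0 \<sigma>"
  let ?A = "{x::real. \<rho> < \<bar>x\<bar>}"
  have "has_bochner_integral lborel (\<lambda>x. ?f x * (x - 0) ^ (2 * 2)) (fact (2 * 2) / ((2 / \<sigma>\<^sup>2) ^ 2 * fact 2))"
    by (rule normal_moment_even[OF \<sigma>(1)])
  moreover have "fact (2 * 2) / ((2 / \<sigma>\<^sup>2) ^ 2 * fact 2) = 3 * (t - s)\<^sup>2"
    unfolding \<sigma>(2) using st by (simp add: fact_numeral power2_eq_square field_simps)
  ultimately have "has_bochner_integral lborel (\<lambda>x. ?f x * x ^ 4 / \<rho> ^ 4) (3 * (t - s)\<^sup>2 / \<rho> ^ 4)"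
    using has_bochner_integral_divide_zero by fastforce
  then have "integrable lborel (\<lambda>x. ?f x * x ^ 4 / \<rho> ^ 4)"
    and "integral\<^sup>L lborel (\<lambda>x. ?f x * x ^ 4 / \<rho> ^ 4) = 3 * (t - s)\<^sup>2 / \<rho> ^ 4"
    by (fact integrable.intros, fact has_bochner_integral_integral_eq)
  moreover have "AE x in lborel. 0 \<le> ?f x * x ^ 4 / \<rho> ^ 4"
    by (intro AE_I2 divide_nonneg_nonneg mult_nonneg_nonneg) auto
  ultimately have moment: "(\<integral>\<^sup>+x. ennreal (?f x * x ^ 4 / \<rho> ^ 4) \<partial>lborel) = ennreal (3 * (t - s)\<^sup>2 / \<rho> ^ 4)"
    using nn_integral_eq_integral by metis
  have "emeasure M (?X -` ?A \<inter> space M) = (\<integral>\<^sup>+x\<in>?A. ennreal (?f x) \<partial>lborel)"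
    unfolding \<sigma>_def by (rule distributed_emeasure[OF increment_distributed[OF st]]) measurable
  also have "\<dots> \<le> (\<integral>\<^sup>+x. ennreal (?f x * x ^ 4 / \<rho> ^ 4) \<partial>lborel)"
  proof (rule nn_integral_mono)
    fix x
    have "?f x * 1 \<le> ?f x * (x ^ 4 / \<rho> ^ 4)" if "\<rho> < \<bar>x\<bar>"
    proof -
      have "\<rho> ^ 4 \<le> \<bar>x\<bar> ^ 4" using \<rho> that by (intro power_mono) auto
      then show ?thesis using \<rho> by (intro mult_left_mono) (simp_all add: power_abs)
    qed
    then show "ennreal (?f x) * indicator ?A x \<le> ennreal (?f x * x ^ 4 / \<rho> ^ 4)"
      by (auto simp: indicator_def intro!: ennreal_leI)
  qed
  also have "?X -` ?A \<inter> space M = {\<omega>\<in>space M. \<rho> < \<bar>W t \<omega> - W s \<omega>\<bar>}" by auto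
  finally show ?thesis unfolding moment emeasure_eq_measure using \<rho> by (simp add: ennreal_le_iff)
qed

lemma grid_increments_indep:
  assumes "d > 0"
  shows "indep_vars (\<lambda>_. borel) (\<lambda>i \<omega>. W (real (Suc i) * d) \<omega> - W (real i * d) \<omega>) {..<L}"
proof -
  define ts where "ts = map (\<lambda>j. real j * d) [0..<Suc L]"
  have "sorted_wrt (<) ts" unfolding ts_def sorted_wrt_map
    by (rule sorted_wrt_mono_rel[OF _ sorted_wrt_upt]) (use assms in auto)
  moreover have "\<forall>t\<in>set ts. 0 \<le> t" unfolding ts_def using assms by auto
  ultimately have "indep_vars (\<lambda>_. borel) (\<lambda>i \<omega>. W (ts ! Suc i) \<omega> - W (ts ! i) \<omega>) {..<length ts - 1}"
    using std_BM unfolding std_BM_def by blast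
  moreover have "ts ! j = real j * d" if "j < Suc L" for j
    unfolding ts_def using that by (simp add: nth_map nth_upt del: upt_Suc)
  ultimately show ?thesis
    unfolding ts_def by (subst (asm) indep_vars_cong[OF refl _ refl]) (auto simp: ts_def[symmetric])
qed

lemma prob_blocks_eq_prod:
  fixes P :: "nat \<Rightarrow> (nat \<Rightarrow> real) \<Rightarrow> bool" and B N :: nat and d :: real
  defines "incr \<equiv> \<lambda>\<omega> i. W (real (Suc i) * d) \<omega> - W (real i * d) \<omega>"
  assumes d: "d > 0" and N: "N \<ge> 1"
    and local: "\<And>k f g. k < N \<Longrightarrow> (\<And>i. i \<in> {k*B..<Suc k*B} \<Longrightarrow> f i = g i) \<Longrightarrow> P k f = P k g"
    and sets: "\<And>k. k < N \<Longrightarrow> {f\<in>space (PiM {k*B..<Suc k*B} (\<lambda>_. borel)). P k f}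
                       \<in> sets (PiM {k*B..<Suc k*B} (\<lambda>_. borel))"
  shows "prob (\<Inter>k<N. {\<omega>\<in>space M. P k (incr \<omega>)}) = (\<Prod>k<N. prob {\<omega>\<in>space M. P k (incr \<omega>)})"
proof -
  define K where "K k = {k*B..<Suc k*B}" for k
  define Y where "Y k \<omega> = restrict (incr \<omega>) (K k)" for k \<omega>
  have "K k \<subseteq> {..<N * B}" if "k \<in> {..<N}" for k
    using that mult_le_mono1[of "Suc k" N B] unfolding K_def by auto
  moreover have "disjoint_family_on K {..<N}"
    unfolding disjoint_family_on_def
  proof (intro ballI impI)
    fix k k' :: nat assume "k \<noteq> k'"
    then have "Suc k \<le> k' \<or> Suc k' \<le> k" by linarith
    then have "Suc k * B \<le> k' * B \<or> Suc k' * B \<le> k * B" using mult_le_mono1 by blast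
    then show "K k \<inter> K k' = {}" unfolding K_def by auto
  qed
  ultimately have "indep_vars (\<lambda>k. PiM (K k) (\<lambda>_. borel)) Y {..<N}"
    unfolding Y_def incr_def by (rule indep_vars_restrict[OF grid_increments_indep[OF d]])
  moreover have "{..<N} \<noteq> {}" using N by (metis lessThan_empty_iff not_one_le_zero)
  moreover define S where "S k = {f\<in>space (PiM (K k) (\<lambda>_. borel)). P k f}" for k
  ultimately have indep: "prob (\<Inter>k\<in>{..<N}. Y k -` S k \<inter> space M) = (\<Prod>k\<in>{..<N}. prob (Y k -` S k \<inter> space M))"
    using sets unfolding K_def S_def by (intro indep_varsD) auto
  have pre: "Y k -` S k \<inter> space M = {\<omega>\<in>space M. P k (incr \<omega>)}" if "k \<in> {..<N}" for k
  proof -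
    have "P k (Y k \<omega>) = P k (incr \<omega>)" for \<omega>
      unfolding Y_def by (rule local) (use that in \<open>auto simp: K_def\<close>)
    then show ?thesis unfolding Y_def S_def by (auto simp: space_PiM)
  qed
  have "(\<Inter>k\<in>{..<N}. Y k -` S k \<inter> space M) = (\<Inter>k\<in>{..<N}. {\<omega>\<in>space M. P k (incr \<omega>)})"
    by (rule INF_cong) (simp_all add: pre)
  moreover have "(\<Prod>k\<in>{..<N}. prob (Y k -` S k \<inter> space M)) = (\<Prod>k\<in>{..<N}. prob {\<omega>\<in>space M. P k (incr \<omega>)})"
    by (rule prod.cong) (simp_all add: pre)
  ultimately show ?thesis using indep by (simp only:)
qed

definition good_block :: "real \<Rightarrow> real \<Rightarrow> real \<Rightarrow> (nat \<Rightarrow> real) \<Rightarrow> nat \<Rightarrow> nat \<Rightarrow> 'w set" where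
  "good_block h a \<eta> rs n k = {\<omega>\<in>space M. \<bar>W (real (Suc k) * h) \<omega> - W (real k * h) \<omega> - a * h\<bar> \<le> \<eta> \<and>
     (\<forall>m\<le>n. \<forall>i<(2::nat)^m. \<bar>W (real k * h + real (Suc i) * h / 2^m) \<omega> - W (real k * h + real i * h / 2^m) \<omega>\<bar> \<le> rs m)}"

lemma good_block_antimono: "n \<le> n' \<Longrightarrow> good_block h a \<eta> rs n' k \<subseteq> good_block h a \<eta> rs n k"
  unfolding good_block_def by auto

lemma sets_good_block:
  assumes "h > 0"
  shows "good_block h a \<eta> rs n k \<in> events"
proof -
  have nonneg: "0 \<le> real k * h + real i * h / 2^m" for i m :: nat using assms by simp
  have "good_block h a \<eta> rs n k = {\<omega>\<in>space M. \<bar>W (real (Suc k) * h) \<omega> - W (real k * h) \<omega> - a * h\<bar> \<le> \<eta>} \<inter>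
     {\<omega>\<in>space M. \<forall>m\<in>{..n}. \<forall>i\<in>{..<(2::nat)^m}.
        \<bar>W (real k * h + real (Suc i) * h / 2^m) \<omega> - W (real k * h + real i * h / 2^m) \<omega> - 0\<bar> \<le> rs m}"
    unfolding good_block_def by auto
  also have "\<dots> \<in> events"
    using assms by (intro sets.Int sets.sets_Collect_finite_All sets_increment_near nonneg) auto
  finally show ?thesis .
qed

text \<open>In terms of the increments over the grid of mesh \<open>h/2\<^sup>n\<close>, different good blocks depend on
  disjoint sets of increments, hence are independent.\<close>

lemma good_block_eq_block_ok:
  "good_block h a \<eta> rs n k =
     {\<omega>\<in>space M. block_ok n (a * h) \<eta> rs k (\<lambda>i. W (real (Suc i) * (h/2^n)) \<omega> - W (real i * (h/2^n)) \<omega>)}"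
proof -
  have grid: "real (k * 2^n + i * 2^(n-m)) * (h / 2^n) = real k * h + real i * h / 2^m"
    if "m \<le> n" for i m :: nat
  proof -
    have "(2::real)^n = 2^(n-m) * 2^m" using that by (simp flip: power_add)
    then show ?thesis by (simp add: field_simps)
  qed
  have telescope: "(\<Sum>j\<in>{p..<q}. W (real (Suc j) * (h/2^n)) \<omega> - W (real j * (h/2^n)) \<omega>)
      = W (real q * (h/2^n)) \<omega> - W (real p * (h/2^n)) \<omega>" if "p \<le> q" for p q \<omega>
    using sum_Suc_diff'[OF that, of "\<lambda>j. W (real j * (h/2^n)) \<omega>"] by simp
  have "block_ok n (a * h) \<eta> rs k (\<lambda>i. W (real (Suc i) * (h/2^n)) \<omega> - W (real i * (h/2^n)) \<omega>) \<longleftrightarrow>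
      \<bar>W (real (Suc k) * h) \<omega> - W (real k * h) \<omega> - a * h\<bar> \<le> \<eta> \<and>
      (\<forall>m\<le>n. \<forall>i<(2::nat)^m.
         \<bar>W (real k * h + real (Suc i) * h / 2^m) \<omega> - W (real k * h + real i * h / 2^m) \<omega>\<bar> \<le> rs m)" for \<omega>
  proof -
    let ?incr = "\<lambda>i. W (real (Suc i) * (h/2^n)) \<omega> - W (real i * (h/2^n)) \<omega>"
    have "real (Suc k * 2^n) * (h / 2^n) = real (Suc k) * h" "real (k * 2^n) * (h / 2^n) = real k * h"
      by (simp_all add: field_simps)
    then have "(\<Sum>i\<in>{k * 2^n..<Suc k * 2^n}. ?incr i) = W (real (Suc k) * h) \<omega> - W (real k * h) \<omega>"
      using telescope[of "k * 2^n" "Suc k * 2^n" \<omega>] by simp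
    moreover have "(\<Sum>j\<in>{k * 2^n + i * 2^(n-m)..<k * 2^n + Suc i * 2^(n-m)}. ?incr j) =
        W (real k * h + real (Suc i) * h / 2^m) \<omega> - W (real k * h + real i * h / 2^m) \<omega>" if "m \<le> n" for m i
      using telescope[of "k * 2^n + i * 2^(n-m)" "k * 2^n + Suc i * 2^(n-m)" \<omega>]
        grid[OF that, of i] grid[OF that, of "Suc i"] by simp
    ultimately show ?thesis unfolding block_ok_def by simp
  qed
  then show ?thesis unfolding good_block_def by blast
qed

lemma prob_good_block_ge:
  assumes h: "h > 0" and rs: "\<And>m. rs m > 0" and \<eta>: "\<eta> > 0"
  shows "2 * \<eta> * normal_density 0 (sqrt h) (\<bar>a * h\<bar> + \<eta>)
           - (\<Sum>m\<le>n. real (2^m) * (3 * (h / 2^m)\<^sup>2 / rs m ^ 4))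
         \<le> prob (good_block h a \<eta> rs n k)"
proof -
  define t0 where "t0 = real k * h"
  define E where "E = {\<omega>\<in>space M. \<bar>W (real (Suc k) * h) \<omega> - W t0 \<omega> - a * h\<bar> \<le> \<eta>}"
  define big where "big m i = {\<omega>\<in>space M. rs m < \<bar>W (t0 + real (Suc i) * h / 2^m) \<omega> - W (t0 + real i * h / 2^m) \<omega>\<bar>}"
    for m i :: nat
  define U where "U = (\<Union>m\<in>{..n}. \<Union>i\<in>{..<(2::nat)^m}. big m i)"
  have t0: "0 \<le> t0" "real (Suc k) * h - t0 = h" unfolding t0_def using h by (simp_all add: algebra_simps)
  have nonneg: "0 \<le> t0 + real i * h / 2^m" for i m :: nat using h t0 by simp
  have E: "E \<in> events" unfolding E_def by (rule sets_increment_near) (use h t0 in simp_all)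
  have big: "big m i \<in> events" for m i unfolding big_def by (rule sets_increment_large[OF nonneg nonneg])
  then have U: "U \<in> events" unfolding U_def by auto
  have "good_block h a \<eta> rs n k = E - U"
    unfolding good_block_def E_def U_def big_def t0_def by (auto simp: not_less) (meson leD)
  moreover have "2 * \<eta> * normal_density 0 (sqrt h) (\<bar>a * h\<bar> + \<eta>) \<le> prob E"
    using prob_increment_near_ge[OF t0(1) _ \<eta>, of "real (Suc k) * h" "a * h"] t0 h unfolding E_def by simp
  moreover have "prob (big m i) \<le> 3 * (h / 2^m)\<^sup>2 / rs m ^ 4" for m i
    using prob_increment_large_le[OF nonneg _ rs, of i m "t0 + real (Suc i) * h / 2^m"] h
    unfolding big_def by (simp add: field_simps)
  then have "prob U \<le> (\<Sum>m\<le>n. real (2^m) * (3 * (h / 2^m)\<^sup>2 / rs m ^ 4))"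
  proof -
    have "prob U \<le> (\<Sum>m\<le>n. prob (\<Union>i<(2::nat)^m. big m i))"
      unfolding U_def using big by (intro finite_measure_subadditive_finite) auto
    also have "\<dots> \<le> (\<Sum>m\<le>n. \<Sum>i<(2::nat)^m. prob (big m i))"
      using big by (intro sum_mono finite_measure_subadditive_finite) auto
    also have "\<dots> \<le> (\<Sum>m\<le>n. \<Sum>i<(2::nat)^m. 3 * (h / 2^m)\<^sup>2 / rs m ^ 4)"
      by (intro sum_mono \<open>\<And>m i. prob (big m i) \<le> 3 * (h / 2^m)\<^sup>2 / rs m ^ 4\<close>)
    finally show ?thesis by simp
  qed
  moreover have "prob (E - U) \<ge> prob E - prob U"
    using finite_measure_Diff'[OF E U] finite_measure_mono[OF _ U, of "E \<inter> U"] by auto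
  ultimately show ?thesis by simp
qed

lemma prob_good_blocks_ge:
  assumes N: "N \<ge> 1" and h: "h > 0" and rs: "\<And>m. rs m > 0" and \<eta>: "\<eta> > 0"
    and bound: "\<And>n. (\<Sum>m\<le>n. real (2^m) * (3 * (h / 2^m)\<^sup>2 / rs m ^ 4)) \<le> \<beta>"
    and pos: "0 \<le> 2 * \<eta> * normal_density 0 (sqrt h) (\<bar>a * h\<bar> + \<eta>) - \<beta>"
  shows "(2 * \<eta> * normal_density 0 (sqrt h) (\<bar>a * h\<bar> + \<eta>) - \<beta>) ^ N
           \<le> prob (\<Inter>n. \<Inter>k<N. good_block h a \<eta> rs n k)"
proof -
  let ?p = "2 * \<eta> * normal_density 0 (sqrt h) (\<bar>a * h\<bar> + \<eta>) - \<beta>"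
  define G where "G n = (\<Inter>k<N. good_block h a \<eta> rs n k)" for n
  have "prob (G n) = (\<Prod>k<N. prob (good_block h a \<eta> rs n k))" for n
    unfolding G_def good_block_eq_block_ok
  proof (rule prob_blocks_eq_prod[where d="h/2^n" and B="2^n" and P="\<lambda>k. block_ok n (a * h) \<eta> rs k"])
    show "block_ok n (a * h) \<eta> rs k f = block_ok n (a * h) \<eta> rs k g"
      if "\<And>i. i \<in> {k * 2^n..<Suc k * 2^n} \<Longrightarrow> f i = g i" for k f g
      using that by (rule block_ok_cong)
    show "{f\<in>space (PiM {k * 2^n..<Suc k * 2^n} (\<lambda>_. borel)). block_ok n (a * h) \<eta> rs k f}
        \<in> sets (PiM {k * 2^n..<Suc k * 2^n} (\<lambda>_. borel))" for k
      by (rule sets_block_ok)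
  qed (use h N in simp_all)
  moreover have "?p ^ N \<le> (\<Prod>k<N. prob (good_block h a \<eta> rs n k))" for n
  proof -
    have "?p \<le> prob (good_block h a \<eta> rs n k)" for k
      using prob_good_block_ge[where rs=rs and a=a and n=n and k=k, OF h rs \<eta>] bound[of n] by linarith
    then show ?thesis using pos prod_mono[of "{..<N}" "\<lambda>_. ?p"] by simp
  qed
  ultimately have lower: "?p ^ N \<le> prob (G n)" for n by simp
  have "{..<N} \<noteq> {}" using N by (metis lessThan_empty_iff not_one_le_zero)
  have G_sets: "G n \<in> events" for n
    unfolding G_def
    by (rule sets.finite_INT[OF finite_lessThan \<open>{..<N} \<noteq> {}\<close>]) (rule sets_good_block[OF h])
  have G_dec: "decseq G"
  proof (rule decseq_SucI)
    fix n
    have "good_block h a \<eta> rs (Suc n) k \<subseteq> good_block h a \<eta> rs n k" for k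
      by (rule good_block_antimono) simp
    then show "G (Suc n) \<subseteq> G n" unfolding G_def by blast
  qed
  have "(\<lambda>n. prob (G n)) \<longlonglongrightarrow> prob (\<Inter>n. G n)"
    by (rule finite_Lim_measure_decseq) (use G_sets G_dec in auto)
  then have "?p ^ N \<le> prob (\<Inter>n. G n)"
    by (rule LIMSEQ_le_const) (use lower in auto)
  then show ?thesis by (simp only: G_def)
qed

lemma tube_if_good_blocks:
  assumes h: "h > 0" and N: "1 \<le> N" and rs: "\<And>n. (\<Sum>m\<le>n. rs m) \<le> \<rho>"
    and good: "\<And>n k. k < N \<Longrightarrow> \<omega> \<in> good_block h a \<eta> rs n k"
    and r: "r \<in> {0..real N * h}"
  shows "\<bar>W r \<omega> - a * r\<bar> \<le> real N * \<eta> + \<rho> + \<bar>a\<bar> * h"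
proof -
  have \<omega>: "\<omega> \<in> space M" using good[of 0 0] N unfolding good_block_def by auto
  show ?thesis
  proof (rule tube_from_grid[where w="\<lambda>r. W r \<omega>", OF W_zero[OF \<omega>] h N _ _ r])
    show "\<bar>W (real (Suc k) * h) \<omega> - W (real k * h) \<omega> - a * h\<bar> \<le> \<eta>" if "k < N" for k
      using good[OF that, of 0] unfolding good_block_def by auto
    show "\<bar>W s \<omega> - W (real k * h) \<omega>\<bar> \<le> \<rho>" if "k < N" "s \<in> {real k * h..real k * h + h}" for k s
    proof (rule dyadic_chaining_le[where w="\<lambda>r. W r \<omega>", OF _ rs _ h that(2)])
      show "\<forall>m. \<forall>i<(2::nat)^m. \<bar>W (real k * h + real (Suc i) * h / 2^m) \<omega> - W (real k * h + real i * h / 2^m) \<omega>\<bar> \<le> rs m"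
        using good[OF that(1)] unfolding good_block_def by blast
      show "continuous_on {real k * h..real k * h + h} (\<lambda>r. W r \<omega>)"
        by (rule continuous_on_subset[OF W_continuous[OF \<omega>]]) (use h in auto)
    qed
  qed
qed

text \<open>Split \<open>[0, T]\<close> into \<open>N\<close> steps of length \<open>h\<close> and take the event that all blocks are good,
  with \<open>\<eta> = \<delta>/(3N)\<close> and radii summing to \<open>\<rho> = \<delta>/3\<close>; \<open>N\<close> is chosen large enough for its
  probability bound \<open>(p - \<beta>)\<^sup>N\<close> to be positive, since \<open>p\<close> is of order \<open>1/\<surd>N\<close> and \<open>\<beta>\<close> of order \<open>1/N\<^sup>2\<close>.\<close>

lemma prob_tube_pos:
  assumes \<delta>: "\<delta> > 0" and T: "T > 0"
  shows "\<exists>G\<in>events. 0 < prob G \<and> (\<forall>\<omega>\<in>G. \<forall>r\<in>{0..T}. \<bar>W r \<omega> - a * r\<bar> \<le> \<delta>)"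
proof -
  obtain N :: nat where N: "1 \<le> N" "(\<bar>a\<bar> + 1) * (T / N) < \<delta> / 3"
    and pos: "86016 * (T / N)\<^sup>2 / (\<delta> / 3) ^ 4
      < 2 * (\<delta> / (3 * N)) * normal_density 0 (sqrt (T / N)) (\<bar>a * (T / N)\<bar> + \<delta> / (3 * N))"
    using block_sizes_exist[OF \<delta> T] by blast
  define h where "h = T / N"
  define \<eta> where "\<eta> = \<delta> / (3 * N)"
  define \<rho> where "\<rho> = \<delta> / 3"
  define rs where "rs m = \<rho> / 8 * (7/8::real)^m" for m
  define G where "G = (\<Inter>n. \<Inter>k<N. good_block h a \<eta> rs n k)"
  have h: "h > 0" and \<eta>: "\<eta> > 0" and \<rho>: "\<rho> > 0" and rs: "\<And>m. rs m > 0"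
    unfolding h_def \<eta>_def \<rho>_def rs_def using N \<delta> T by auto
  have "{..<N} \<noteq> {}" using N by (metis lessThan_empty_iff not_one_le_zero)
  then have "(\<Inter>k<N. good_block h a \<eta> rs n k) \<in> events" for n
    by (rule sets.finite_INT[OF finite_lessThan]) (rule sets_good_block[OF h])
  then have "G \<in> events" unfolding G_def by (intro sets.countable_INT) auto
  moreover have "0 < prob G"
  proof -
    let ?\<beta> = "86016 * h\<^sup>2 / \<rho> ^ 4"
    have "0 < 2 * \<eta> * normal_density 0 (sqrt h) (\<bar>a * h\<bar> + \<eta>) - ?\<beta>"
      using pos unfolding h_def \<eta>_def \<rho>_def by simp
    moreover have "(\<Sum>m\<le>n. real (2^m) * (3 * (h / 2^m)\<^sup>2 / rs m ^ 4)) \<le> ?\<beta>" for n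
      unfolding rs_def by (rule sum_dyadic_tail_bounds_le[OF \<rho>])
    ultimately have "(2 * \<eta> * normal_density 0 (sqrt h) (\<bar>a * h\<bar> + \<eta>) - ?\<beta>) ^ N \<le> prob G"
      unfolding G_def by (intro prob_good_blocks_ge[OF N(1) h rs \<eta>]) auto
    then show ?thesis using \<open>0 < 2 * \<eta> * _ - ?\<beta>\<close> by (meson zero_less_power less_le_trans)
  qed
  moreover have "\<bar>W r \<omega> - a * r\<bar> \<le> \<delta>" if "\<omega> \<in> G" and "r \<in> {0..T}" for \<omega> r
  proof -
    have "(\<Sum>m\<le>n. rs m) \<le> \<rho>" for n unfolding rs_def using sum_dyadic_radii_le \<rho> by simp
    moreover have "\<omega> \<in> good_block h a \<eta> rs n k" if "k < N" for n k
      using \<open>\<omega> \<in> G\<close> that unfolding G_def by blast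
    moreover have "r \<in> {0..real N * h}" using \<open>r \<in> {0..T}\<close> N unfolding h_def by simp
    ultimately have "\<bar>W r \<omega> - a * r\<bar> \<le> real N * \<eta> + \<rho> + \<bar>a\<bar> * h"
      using tube_if_good_blocks[OF h N(1)] by blast
    moreover have "real N * \<eta> = \<delta> / 3" unfolding \<eta>_def using N by simp
    moreover have "\<bar>a\<bar> * h \<le> (\<bar>a\<bar> + 1) * h" using h by (intro mult_right_mono) auto
    ultimately show ?thesis using N(2)[folded h_def] unfolding \<rho>_def by linarith
  qed
  ultimately show ?thesis by blast
qed

end

section \<open>Exit events of the drift-diffusion model\<close>

lemma admissible_boundaryD:
  assumes "constant_boundary b \<or> collapsing_boundary b"
  shows "\<And>t. t \<ge> 0 \<Longrightarrow> b t > 0" and "continuous_on {0..} b"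
    and "\<And>s t. 0 \<le> s \<Longrightarrow> s \<le> t \<Longrightarrow> b t \<le> b s"
proof -
  show "b t > 0" if "t \<ge> 0" for t
    using assms that unfolding constant_boundary_def collapsing_boundary_def by auto
  show "b t \<le> b s" if "0 \<le> s" "s \<le> t" for s t
    using assms that unfolding constant_boundary_def collapsing_boundary_def
    by (cases "s = t") (auto intro: less_imp_le)
  show "continuous_on {0..} b"
    using assms unfolding constant_boundary_def collapsing_boundary_def
    by (auto intro: continuous_on_eq[of _ "\<lambda>_. _"])
qed

text \<open>Both inequalities also hold when \<open>p1\<close> or \<open>p2\<close> vanishes, where \<open>x / 0 = 0\<close>.\<close>

lemma div_le_ratio_mult_div:
  fixes u1 u2 p1 p2 :: real
  assumes "0 \<le> u1" "u1 \<le> u2" "u2 \<le> p2" "0 \<le> p1"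
  shows "u1 / p1 \<le> p2 / p1 * (u2 / p2)"
proof (cases "p2 = 0")
  case True
  then have "u1 = 0" using assms by simp
  then show ?thesis using True by simp
next
  case False
  then show ?thesis using assms by (simp add: divide_right_mono)
qed

lemma div_less_ratio_mult_div:
  fixes u1 u2 p1 p2 :: real
  assumes "0 \<le> u1" "u1 < u2" "u2 \<le> p2" "0 < p1"
  shows "u1 / p1 < p2 / p1 * (u2 / p2)"
  using assms by (simp add: divide_strict_right_mono)

locale ddm_boundary = brownian_motion +
  fixes b :: "real \<Rightarrow> real"
  assumes b_pos: "t \<ge> 0 \<Longrightarrow> b t > 0"
    and b_continuous: "continuous_on {0..} b"
    and b_antimono: "0 \<le> s \<Longrightarrow> s \<le> t \<Longrightarrow> b t \<le> b s"
begin

lemma ddm_proc_continuous: "\<omega> \<in> space M \<Longrightarrow> continuous_on {0..} (\<lambda>t. ddm_proc mu sg W t \<omega>)"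
  unfolding ddm_proc_def by (intro continuous_intros W_continuous)

lemma ddm_proc_zero: "\<omega> \<in> space M \<Longrightarrow> ddm_proc mu sg W 0 \<omega> = 0"
  unfolding ddm_proc_def by (simp add: W_zero)

lemma upper_by_iff:
  assumes "\<omega> \<in> space M"
  shows "\<omega> \<in> upper_by mu sg W b T \<longleftrightarrow>
    (\<exists>s\<in>{0..T}. b s \<le> ddm_proc mu sg W s \<omega> \<and> (\<forall>r\<in>{0..s}. - b r < ddm_proc mu sg W r \<omega>))"
  unfolding upper_by_def
  using ex_first_hit_upper_iff[OF ddm_proc_continuous[OF assms] b_continuous b_pos ddm_proc_zero[OF assms]]
  by simp

lemma upper_by_eq_rat:
  "upper_by mu sg W b T \<inter> space M = {\<omega>\<in>space M. \<exists>n::nat. \<forall>k::nat. \<exists>q\<in>rat_upto T.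
      - inverse (real (Suc k)) < mu * q + sg * W q \<omega> - b q \<and>
      (\<forall>r\<in>rat_upto q. inverse (real (Suc n)) \<le> mu * r + sg * W r \<omega> + b r)}"
proof -
  have "\<omega> \<in> upper_by mu sg W b T \<longleftrightarrow> (\<exists>n::nat. \<forall>k::nat. \<exists>q\<in>rat_upto T.
      - inverse (real (Suc k)) < mu * q + sg * W q \<omega> - b q \<and>
      (\<forall>r\<in>rat_upto q. inverse (real (Suc n)) \<le> mu * r + sg * W r \<omega> + b r))"
    if \<omega>: "\<omega> \<in> space M" for \<omega>
  proof -
    let ?Z = "\<lambda>t. ddm_proc mu sg W t \<omega>"
    have "continuous_on {0..} (\<lambda>t. ?Z t - b t)" "continuous_on {0..} (\<lambda>t. ?Z t + b t)"
      using ddm_proc_continuous[OF \<omega>] b_continuous by (auto intro: continuous_intros)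
    moreover have "?Z t - b t < ?Z t + b t" if "t \<ge> 0" for t using b_pos[OF that] by simp
    moreover have "(\<exists>s\<in>{0..T}. b s \<le> ?Z s \<and> (\<forall>r\<in>{0..s}. - b r < ?Z r)) \<longleftrightarrow>
        (\<exists>s\<in>{0..T}. 0 \<le> ?Z s - b s \<and> (\<forall>r\<in>{0..s}. 0 < ?Z r + b r))"
      by (intro bex_cong refl) auto
    ultimately show ?thesis
      unfolding upper_by_iff[OF \<omega>]
      using exit_condition_iff_rat[of "\<lambda>t. ?Z t - b t" "\<lambda>t. ?Z t + b t" T]
      by (simp add: ddm_proc_def)
  qed
  then show ?thesis by auto
qed

lemma sets_upper_by: "upper_by mu sg W b T \<inter> space M \<in> events"
proof -
  have "{\<omega>\<in>space M. c < mu * q + sg * W q \<omega> - b q} \<in> events"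
    and "{\<omega>\<in>space M. c \<le> mu * q + sg * W q \<omega> + b q} \<in> events" if "q \<in> rat_upto x" for c q x
    using W_measurable[OF rat_upto_nonneg[OF that]] by measurable
  then show ?thesis
    unfolding upper_by_eq_rat
    by (intro sets.sets_Collect_countable_Ex sets.sets_Collect_countable_All
          sets.sets_Collect_countable_Ex' sets.sets_Collect_conj
          sets.sets_Collect_countable_All' countable_rat_upto) auto
qed

lemma upper_chosen_eq_UN:
  "upper_chosen mu sg W b \<inter> space M = (\<Union>n::nat. upper_by mu sg W b (real n) \<inter> space M)"
proof -
  have "(\<exists>s. P s) \<longleftrightarrow> (\<exists>n::nat. \<exists>s\<le>real n. P s)" for P :: "real \<Rightarrow> bool"
    by (meson real_arch_simple)
  then show ?thesis unfolding upper_chosen_def upper_by_def by blast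
qed

lemma sets_upper_chosen: "upper_chosen mu sg W b \<inter> space M \<in> events"
  unfolding upper_chosen_eq_UN using sets_upper_by by blast

lemma prob_upper_by_le_upper_chosen:
  "prob (upper_by mu sg W b T \<inter> space M) \<le> prob (upper_chosen mu sg W b \<inter> space M)"
  by (rule finite_measure_mono[OF _ sets_upper_chosen]) (auto simp: upper_by_def upper_chosen_def)

text \<open>Both drifts act on the same Brownian path, and the path with the larger drift lies above.\<close>

lemma upper_by_drift_mono:
  assumes "mu \<le> mu'"
  shows "upper_by mu sg W b T \<inter> space M \<subseteq> upper_by mu' sg W b T \<inter> space M"
proof
  fix \<omega> assume \<omega>: "\<omega> \<in> upper_by mu sg W b T \<inter> space M"
  then have \<omega>_space: "\<omega> \<in> space M"
    and hit: "\<exists>s\<le>T. first_hit_upper_at b (\<lambda>t. ddm_proc mu sg W t \<omega>) s"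
    unfolding upper_by_def by auto
  have le: "ddm_proc mu sg W t \<omega> \<le> ddm_proc mu' sg W t \<omega>" if "t \<ge> 0" for t
    unfolding ddm_proc_def using assms that by (simp add: mult_right_mono)
  have "\<exists>s\<le>T. first_hit_upper_at b (\<lambda>t. ddm_proc mu' sg W t \<omega>) s"
    by (rule ex_first_hit_upper_mono[OF ddm_proc_continuous[OF \<omega>_space] b_continuous b_pos
          ddm_proc_zero[OF \<omega>_space] le hit])
  then show "\<omega> \<in> upper_by mu' sg W b T \<inter> space M"
    using \<omega>_space unfolding upper_by_def by auto
qed

lemma upper_by_if_above_line:
  assumes \<omega>: "\<omega> \<in> space M"
    and above: "\<And>r. r \<in> {0..1} \<Longrightarrow> 2 * b 1 * r - b 1 / 2 \<le> ddm_proc mu sg W r \<omega>"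
  shows "\<omega> \<in> upper_by mu sg W b 1"
  unfolding upper_by_iff[OF \<omega>]
proof (intro bexI[of _ 1] conjI ballI)
  have "0 < b 1" using b_pos by simp
  then show "b 1 \<le> ddm_proc mu sg W 1 \<omega>" using above[of 1] by simp
  show "- b r < ddm_proc mu sg W r \<omega>" if r: "r \<in> {0..1}" for r
  proof -
    have "0 \<le> 2 * b 1 * r" using \<open>0 < b 1\<close> r by simp
    moreover have "b 1 \<le> b r" using b_antimono r by simp
    ultimately show ?thesis using above[OF r] \<open>0 < b 1\<close> by linarith
  qed
qed simp

text \<open>Whatever the drift, with positive probability \<open>W\<close> follows the line of slope \<open>(2 b 1 - mu)/sg\<close>
  closely enough for the diffusion to stay above the line \<open>2 b 1 r - b 1/2\<close> up to time \<open>1\<close>.\<close>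

lemma prob_upper_chosen_pos:
  assumes sg: "sg > 0"
  shows "0 < prob (upper_chosen mu sg W b \<inter> space M)"
proof -
  define B where "B = b 1"
  obtain G where G: "G \<in> events" "0 < prob G"
    and tube: "\<And>\<omega> r. \<omega> \<in> G \<Longrightarrow> r \<in> {0..1} \<Longrightarrow> \<bar>W r \<omega> - (2 * B - mu) / sg * r\<bar> \<le> B / (2 * sg)"
    using prob_tube_pos[of "B / (2 * sg)" 1 "(2 * B - mu) / sg"] b_pos[of 1] sg unfolding B_def by auto
  have "G \<subseteq> upper_chosen mu sg W b \<inter> space M"
  proof
    fix \<omega> assume \<omega>: "\<omega> \<in> G"
    then have \<omega>_space: "\<omega> \<in> space M" using G(1) sets.sets_into_space by blast
    have "2 * B * r - B / 2 \<le> ddm_proc mu sg W r \<omega>" if "r \<in> {0..1}" for r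
    proof -
      have "(2 * B - mu) / sg * r - B / (2 * sg) \<le> W r \<omega>" using tube[OF \<omega> that] by linarith
      then have "sg * ((2 * B - mu) / sg * r - B / (2 * sg)) \<le> sg * W r \<omega>"
        using sg by (intro mult_left_mono) auto
      moreover have "sg * ((2 * B - mu) / sg * r - B / (2 * sg)) = (2 * B - mu) * r - B / 2"
        using sg by (simp add: field_simps)
      ultimately show ?thesis unfolding ddm_proc_def by (simp add: algebra_simps)
    qed
    then have "\<omega> \<in> upper_by mu sg W b 1" unfolding B_def by (rule upper_by_if_above_line[OF \<omega>_space])
    then show "\<omega> \<in> upper_chosen mu sg W b \<inter> space M"
      using \<omega>_space unfolding upper_by_def upper_chosen_def by auto
  qed
  then show ?thesis using G finite_measure_mono[OF _ sets_upper_chosen] by (meson less_le_trans)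
qed

text \<open>At \<open>T = 2 b 0/mu\<close> the drift alone carries the upper diffusion to \<open>2 b 0\<close>, while the lower one
  stays below the noise, which is smaller than \<open>b T\<close>.\<close>

lemma upper_by_separated_if_small_noise:
  assumes \<omega>: "\<omega> \<in> space M" and mu: "mu > 0"
    and small: "\<And>r. r \<in> {0..2 * b 0 / mu} \<Longrightarrow> \<bar>sg * W r \<omega>\<bar> \<le> b (2 * b 0 / mu) / 4"
  shows "\<omega> \<in> upper_by mu sg W b (2 * b 0 / mu)" and "\<omega> \<notin> upper_by (- mu) sg W b (2 * b 0 / mu)"
proof -
  define T where "T = 2 * b 0 / mu"
  have T: "T > 0" "mu * T = 2 * b 0" unfolding T_def using b_pos[of 0] mu by simp_all
  have bT: "0 < b T" "b T \<le> b 0" "\<And>r. r \<in> {0..T} \<Longrightarrow> b T \<le> b r"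
    using b_pos b_antimono T by auto
  have small: "\<bar>sg * W r \<omega>\<bar> \<le> b T / 4" if "r \<in> {0..T}" for r
    using small that unfolding T_def by blast
  have "\<omega> \<in> upper_by mu sg W b T"
    unfolding upper_by_iff[OF \<omega>]
  proof (intro bexI conjI ballI)
    show "T \<in> {0..T}" using T by simp
    have "\<bar>sg * W T \<omega>\<bar> \<le> b T / 4" using T(1) by (intro small) simp
    then show "b T \<le> ddm_proc mu sg W T \<omega>"
      unfolding ddm_proc_def using T(2) bT(1,2) by linarith
    show "- b r < ddm_proc mu sg W r \<omega>" if r: "r \<in> {0..T}" for r
    proof -
      have "0 \<le> mu * r" using mu r by simp
      then show ?thesis using small[OF r] bT(1) bT(3)[OF r] unfolding ddm_proc_def by linarith
    qed
  qed
  then show "\<omega> \<in> upper_by mu sg W b (2 * b 0 / mu)" unfolding T_def .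
  show "\<omega> \<notin> upper_by (- mu) sg W b (2 * b 0 / mu)"
  proof
    assume "\<omega> \<in> upper_by (- mu) sg W b (2 * b 0 / mu)"
    then obtain s where s: "s \<in> {0..T}" "b s \<le> - mu * s + sg * W s \<omega>"
      unfolding upper_by_iff[OF \<omega>] ddm_proc_def T_def by auto
    moreover have "0 \<le> mu * s" using mu s(1) by simp
    ultimately show False using small[OF s(1)] bT(1) bT(3)[OF s(1)] by linarith
  qed
qed

lemma prob_upper_by_neg_drift_less:
  assumes mu: "mu > 0" and sg: "sg > 0"
  shows "\<exists>T\<ge>0. prob (upper_by (- mu) sg W b T \<inter> space M) < prob (upper_by mu sg W b T \<inter> space M)"
proof -
  define T where "T = 2 * b 0 / mu"
  have T: "T > 0" unfolding T_def using b_pos mu by simp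
  obtain G where G: "G \<in> events" "0 < prob G"
    and tube: "\<And>\<omega> r. \<omega> \<in> G \<Longrightarrow> r \<in> {0..T} \<Longrightarrow> \<bar>W r \<omega> - 0 * r\<bar> \<le> b T / (4 * sg)"
    using prob_tube_pos[OF _ T, of "b T / (4 * sg)" 0] b_pos[of T] T sg by auto
  have "G \<subseteq> (upper_by mu sg W b T \<inter> space M) - (upper_by (- mu) sg W b T \<inter> space M)"
  proof
    fix \<omega> assume \<omega>: "\<omega> \<in> G"
    then have \<omega>_space: "\<omega> \<in> space M" using G(1) sets.sets_into_space by blast
    have "\<bar>sg * W r \<omega>\<bar> \<le> b T / 4" if "r \<in> {0..T}" for r
    proof -
      have "sg * \<bar>W r \<omega>\<bar> \<le> sg * (b T / (4 * sg))"
        using tube[OF \<omega> that] sg by (intro mult_left_mono) auto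
      then show ?thesis using sg by (simp add: abs_mult)
    qed
    then show "\<omega> \<in> (upper_by mu sg W b T \<inter> space M) - (upper_by (- mu) sg W b T \<inter> space M)"
      using upper_by_separated_if_small_noise[OF \<omega>_space mu] \<omega>_space unfolding T_def by auto
  qed
  then have "prob G \<le> prob ((upper_by mu sg W b T \<inter> space M) - (upper_by (- mu) sg W b T \<inter> space M))"
    by (rule finite_measure_mono) (use sets_upper_by in auto)
  also have "\<dots> = prob (upper_by mu sg W b T \<inter> space M) - prob (upper_by (- mu) sg W b T \<inter> space M)"
    by (rule finite_measure_Diff[OF sets_upper_by sets_upper_by upper_by_drift_mono]) (use mu in simp)
  finally show ?thesis using G(2) T by (intro exI[of _ T]) auto
qed

definition choice_prob :: "real \<Rightarrow> real \<Rightarrow> real" where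
  "choice_prob mu sg = prob (upper_chosen mu sg W b \<inter> space M)"

definition rt_cdf :: "real \<Rightarrow> real \<Rightarrow> real \<Rightarrow> real" where
  "rt_cdf mu sg t = prob (upper_by mu sg W b t \<inter> space M) / choice_prob mu sg"

lemma rt_cdf_neg_drift_le:
  assumes "0 \<le> mu"
  shows "rt_cdf (- mu) sg t \<le> choice_prob mu sg / choice_prob (- mu) sg * rt_cdf mu sg t"
  unfolding rt_cdf_def choice_prob_def using assms
  by (intro div_le_ratio_mult_div measure_nonneg prob_upper_by_le_upper_chosen
        finite_measure_mono[OF upper_by_drift_mono sets_upper_by]) simp

lemma rt_cdf_neg_drift_less:
  assumes "0 < mu" and "0 < sg"
  obtains t where "t \<ge> 0" "rt_cdf (- mu) sg t < choice_prob mu sg / choice_prob (- mu) sg * rt_cdf mu sg t"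
  using prob_upper_by_neg_drift_less[OF assms] prob_upper_chosen_pos[OF assms(2)]
  unfolding rt_cdf_def choice_prob_def
  by (metis div_less_ratio_mult_div measure_nonneg prob_upper_by_le_upper_chosen)

end

lemma DDM_generates_pairD:
  assumes gen: "DDM_generates D u M W mu sg b p F" and xy: "(x, y) \<in> D" and yx: "(y, x) \<in> D"
  shows "ddm_boundary M W b" and "sg > 0"
    and "0 \<le> mu x y \<longleftrightarrow> u y \<le> u x" and "0 < mu x y \<longleftrightarrow> u y < u x"
    and "p x y = measure M (upper_chosen (mu x y) sg W b \<inter> space M)"
    and "p y x = measure M (upper_chosen (- mu x y) sg W b \<inter> space M)"
    and "t \<ge> 0 \<Longrightarrow> F x y t = measure M (upper_by (mu x y) sg W b t \<inter> space M) / p x y"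
    and "t \<ge> 0 \<Longrightarrow> F y x t = measure M (upper_by (- mu x y) sg W b t \<inter> space M) / p y x"
proof -
  have BM: "std_BM M W" and bnd: "constant_boundary b \<or> collapsing_boundary b"
    and drift: "\<And>a c. (a, c) \<in> D \<Longrightarrow> mu a c = - mu c a \<and> (0 \<le> mu a c \<longleftrightarrow> u c \<le> u a)"
    and p: "\<And>a c. (a, c) \<in> D \<Longrightarrow> p a c = measure M (upper_chosen (mu a c) sg W b \<inter> space M)"
    and F: "\<And>a c t. (a, c) \<in> D \<Longrightarrow> t \<ge> 0 \<Longrightarrow> F a c t =
      measure M (upper_by (mu a c) sg W b t \<inter> space M) / measure M (upper_chosen (mu a c) sg W b \<inter> space M)"
    using gen unfolding DDM_generates_def by auto
  show "ddm_boundary M W b"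
    using BM admissible_boundaryD[OF bnd] by unfold_locales auto
  show "sg > 0" using gen unfolding DDM_generates_def by simp
  show "0 \<le> mu x y \<longleftrightarrow> u y \<le> u x" "0 < mu x y \<longleftrightarrow> u y < u x"
    using drift[OF xy] drift[OF yx] by auto
  show "p x y = measure M (upper_chosen (mu x y) sg W b \<inter> space M)"
    "p y x = measure M (upper_chosen (- mu x y) sg W b \<inter> space M)"
    using p[OF xy] p[OF yx] drift[OF yx] by simp_all
  show "F x y t = measure M (upper_by (mu x y) sg W b t \<inter> space M) / p x y"
    "F y x t = measure M (upper_by (- mu x y) sg W b t \<inter> space M) / p y x" if "t \<ge> 0"
    using F[OF xy that] F[OF yx that] p[OF xy] p[OF yx] drift[OF yx] by simp_all
qed

theorem proposition6:
  fixes X :: "'a set" and D :: "('a \<times> 'a) set" and u :: "'a \<Rightarrow> real"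
    and M :: "'w measure" and W :: "real \<Rightarrow> 'w \<Rightarrow> real"
    and mu :: "'a \<Rightarrow> 'a \<Rightarrow> real" and sg :: real and b :: "real \<Rightarrow> real"
    and p :: "'a \<Rightarrow> 'a \<Rightarrow> real" and F :: "'a \<Rightarrow> 'a \<Rightarrow> real \<Rightarrow> real"
    and x y :: 'a
  assumes "finite X"
    and "D \<subseteq> {(a, c). a \<in> X \<and> c \<in> X \<and> a \<noteq> c}"
    and "D \<noteq> {}"
    and "\<forall>(a, c)\<in>D. (c, a) \<in> D"
    and "DDM_generates D u M W mu sg b p F"
    and "(x, y) \<in> D"
  shows "(u x \<ge> u y \<longrightarrow> q_FSD (p x y / p y x) (F y x) (F x y)) \<and>
         (u x > u y \<longrightarrow> q_SFSD (p x y / p y x) (F y x) (F x y))"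
proof -
  have "(y, x) \<in> D" using assms(4,6) by auto
  note pair = DDM_generates_pairD[OF assms(5,6) this]
  interpret ddm_boundary M W b by (rule pair(1))
  have p: "p x y = choice_prob (mu x y) sg" "p y x = choice_prob (- mu x y) sg"
    using pair(5,6) unfolding choice_prob_def by simp_all
  have F: "F x y t = rt_cdf (mu x y) sg t" "F y x t = rt_cdf (- mu x y) sg t" if "t \<ge> 0" for t
    using pair(7,8)[OF that] unfolding rt_cdf_def p by simp_all
  have "F y x t \<le> p x y / p y x * F x y t" if "u y \<le> u x" "t \<ge> 0" for t
    unfolding p F[OF that(2)] using that(1) pair(3) by (intro rt_cdf_neg_drift_le) simp
  moreover have "\<exists>t\<ge>0. F y x t < p x y / p y x * F x y t" if "u y < u x"
  proof -
    have "0 < mu x y" using that pair(4) by simp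
    then obtain t where "t \<ge> 0"
      "rt_cdf (- mu x y) sg t < choice_prob (mu x y) sg / choice_prob (- mu x y) sg * rt_cdf (mu x y) sg t"
      using rt_cdf_neg_drift_less pair(2) by blast
    then show ?thesis unfolding p using F by auto
  qed
  ultimately show ?thesis unfolding q_SFSD_def q_FSD_def by auto
qed

end
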